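(* Let $p,n$ be positive integers, $\lambda$ a partition of $n$ and $\mu\in\mathrm{Par}(n,p)$, such that $\lambda\in\mathrm{Par}(n,pq)$ for the values of $q$ considered. There is an integer $q_+$ with $1\le q_+\le n$ such that $(\bar\lambda,\bar\mu)\in\Gamma^{p,q}$ for every integer $q\ge q_+$.
   Context: $\mathrm{Par}(n,d)$ is the set of partitions of $n$ with at most $d$ rows. For a partition $\lambda$ of $n$, $\bar\lambda=(\lambda_1/n,\lambda_2/n,\dots)$, padded with zeros to the required length. $\Gamma^{p,q}$ is the set of pairs $(\mathrm{spec}(\rho_{AB}),\mathrm{spec}(\rho_A))$, where $\rho_{AB}$ ranges over density operators on $\mathbb{C}^p\otimes\mathbb{C}^q$, $\rho_A=\mathrm{tr}_B\rho_{AB}$, and spectra are non-increasingly ordered vectors in $\mathbb{R}^{pq}$ and $\mathbb{R}^p$. *)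

theory Defs
  imports "Jordan_Normal_Form.Schur_Decomposition" "Jordan_Normal_Form.Char_Poly"
begin

definition is_partition :: "nat \<Rightarrow> nat list \<Rightarrow> bool" where
  "is_partition n la \<longleftrightarrow> sorted_wrt (\<ge>) la \<and> (\<forall>x\<in>set la. 0 < x) \<and> sum_list la = n"

definition Par :: "nat \<Rightarrow> nat \<Rightarrow> nat list set" where
  "Par n d = {la. is_partition n la \<and> length la \<le> d}"

definition bar :: "nat \<Rightarrow> nat \<Rightarrow> nat list \<Rightarrow> real list" where
  "bar n d la = map (\<lambda>x. real x / real n) la @ replicate (d - length la) 0"

definition density_op :: "nat \<Rightarrow> complex mat \<Rightarrow> bool" where
  "density_op d \<rho> \<longleftrightarrow> \<rho> \<in> carrier_mat d d \<and> mat_adjoint \<rho> = \<rho> \<and>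
     (\<forall>v \<in> carrier_vec d.
        0 \<le> Re (\<Sum>i<d. \<Sum>j<d. cnj (v $ i) * \<rho> $$ (i, j) * v $ j)) \<and>
     (\<Sum>i<d. \<rho> $$ (i, i)) = 1"

(* partial trace over B of an operator on C^p \<otimes> C^q, basis e_i \<otimes> f_j indexed by i*q+j *)
definition ptrace_B :: "nat \<Rightarrow> nat \<Rightarrow> complex mat \<Rightarrow> complex mat" where
  "ptrace_B p q \<rho> = mat p p (\<lambda>(i, i'). \<Sum>j<q. \<rho> $$ (i * q + j, i' * q + j))"

definition is_spec :: "complex mat \<Rightarrow> real list \<Rightarrow> bool" where
  "is_spec A s \<longleftrightarrow> sorted_wrt (\<ge>) s \<and> length s = dim_row A \<and>
     char_poly A = (\<Prod>a\<leftarrow>s. [:- complex_of_real a, 1:])"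

definition Gamma :: "nat \<Rightarrow> nat \<Rightarrow> (real list \<times> real list) set" where
  "Gamma p q = {(s, t). \<exists>\<rho>. density_op (p * q) \<rho> \<and> is_spec \<rho> s \<and>
                        is_spec (ptrace_B p q \<rho>) t}"

end

theory Submission
  imports Defs
begin

text \<open>Put \<open>u\<^sub>i = sqrt (\<mu>\<^sub>i / n)\<close> and, for \<open>k < q\<close>, let
  \<open>\<psi>\<^sub>k = \<Sum>\<^sub>i u\<^sub>i e\<^sub>i \<otimes> f\<^bsub>(i + k) mod q\<^esub>\<close>.
  Distinct \<open>k\<close> give disjoint supports, so the \<open>\<psi>\<^sub>k\<close> are orthonormal and
  \<open>\<rho> = \<Sum>\<^sub>k (\<lambda>\<^sub>k / n) \<psi>\<^sub>k \<psi>\<^sub>k\<^sup>T\<close> has spectrum \<open>\<lambda> / n\<close> once \<open>\<lambda>\<close> has at most \<open>q\<close> rows.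
  In the partial trace over \<open>B\<close> the entries between rows \<open>i \<noteq> i'\<close> vanish, because
  \<open>i + k\<close> and \<open>i' + k\<close> are different residues mod \<open>q\<close> once \<open>\<mu>\<close> has at most \<open>q\<close> rows;
  what remains is \<open>diag (\<mu> / n)\<close>. So \<open>q\<^sub>+ = max 1 (max (length \<lambda>) (length \<mu>))\<close> works.\<close>

lemma mod_add_left_cancel_less:
  fixes i k l q :: nat
  assumes "k < q" "l < q" "(i + k) mod q = (i + l) mod q"
  shows "k = l"
proof -
  have "(int i + int k) mod int q = (int i + int l) mod int q"
    using assms(3) by (metis of_nat_add zmod_int)
  then have "int k mod int q = int l mod int q"
    using mod_diff_cong[of "int i + int k" "int q" "int i + int l" "int i" "int i"] by simp
  then show ?thesis using assms(1,2) by simp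
qed

lemma sum_lessThan_mult_nat:
  fixes p q :: nat
  shows "(\<Sum>a<p * q. f a) = (\<Sum>i<p. \<Sum>j<q. f (i * q + j))"
proof -
  have "sum f {i * q..<i * q + q} = (\<Sum>j<q. f (i * q + j))" for i
    using sum.shift_bounds_nat_ivl[of f 0 "i * q" q] by (simp add: add.commute lessThan_atLeast0)
  then show ?thesis by (simp add: sum.nat_group[symmetric])
qed

lemma mult_add_less_mult:
  fixes i j p q :: nat
  assumes "i < p" "j < q"
  shows "i * q + j < p * q"
proof -
  have "i * q + j < Suc i * q" using assms(2) by simp
  also have "\<dots> \<le> p * q" using assms(1) by (intro mult_right_mono) auto
  finally show ?thesis .
qed

lemma reflection_involutive:
  fixes w :: "nat \<Rightarrow> nat \<Rightarrow> real" and g t :: real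
  assumes gram: "\<And>k l. k < K \<Longrightarrow> l < K \<Longrightarrow>
      (\<Sum>x<N. w k x * w l x) = (if k = l then g else 0)"
    and "t * t * g = 2 * t" and "a < N" "b < N"
  defines "V x y \<equiv> (if x = y then 1 else 0) - t * (\<Sum>k<K. w k x * w k y)"
  shows "(\<Sum>x<N. V a x * V x b) = (if a = b then 1 else 0)"
proof -
  define S where "S x y = (\<Sum>k<K. w k x * w k y)" for x y
  have SS: "(\<Sum>x<N. S a x * S x b) = g * S a b"
  proof -
    have "(\<Sum>x<N. S a x * S x b)
        = (\<Sum>x<N. \<Sum>k<K. \<Sum>l<K. w k a * w l b * (w k x * w l x))"
      unfolding S_def sum_product by (intro sum.cong refl) (simp add: algebra_simps)
    also have "\<dots> = (\<Sum>k<K. \<Sum>l<K. w k a * w l b * (\<Sum>x<N. w k x * w l x))"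
      by (simp add: sum_distrib_left sum.swap[of _ "{..<N}"])
    also have "\<dots> = g * S a b"
      by (simp add: gram S_def if_distrib sum.delta sum_distrib_left algebra_simps cong: if_cong)
    finally show ?thesis .
  qed
  have "V a x * V x b = (if x = a then (if a = b then 1 else 0) else 0)
      - (if x = a then t * S a b else 0) - (if x = b then t * S a b else 0)
      + t * t * (S a x * S x b)" for x
    by (simp add: V_def S_def algebra_simps)
  then have "(\<Sum>x<N. V a x * V x b) = (if a = b then 1 else 0) - 2 * t * S a b
      + t * t * (\<Sum>x<N. S a x * S x b)"
    using assms(3,4) by (simp add: sum.distrib sum_subtractf sum_distrib_left sum.delta')
  then show ?thesis unfolding SS using assms(2) by (simp flip: mult.assoc)
qed

text \<open>The witness is the reflection \<open>V = I - (1/(1 - c)) \<Sum>\<^sub>k w\<^sub>k w\<^sub>k\<^sup>T\<close> in the vectors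
  \<open>w\<^sub>k = \<psi>\<^sub>k - e\<^sub>k\<close>, which are orthogonal of squared length \<open>2 - 2c\<close>.
  For \<open>c = 1\<close> all \<open>w\<^sub>k\<close> vanish, so the junk value \<open>1/0 = 0\<close> is harmless.\<close>

lemma symmetric_involution_onto_frame:
  fixes psi :: "nat \<Rightarrow> nat \<Rightarrow> real" and c :: real
  assumes "K \<le> N"
    and orthonormal: "\<And>k l. k < K \<Longrightarrow> l < K \<Longrightarrow>
      (\<Sum>a<N. psi k a * psi l a) = (if k = l then 1 else 0)"
    and overlap: "\<And>k l. k < K \<Longrightarrow> l < K \<Longrightarrow> psi k l = (if k = l then c else 0)"
  obtains V :: "nat \<Rightarrow> nat \<Rightarrow> real" where
    "\<And>a l. a < N \<Longrightarrow> l < K \<Longrightarrow> V a l = psi l a"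
    "\<And>a b. V a b = V b a"
    "\<And>a b. a < N \<Longrightarrow> b < N \<Longrightarrow> (\<Sum>x<N. V a x * V x b) = (if a = b then 1 else 0)"
proof -
  define w where "w k a = psi k a - (if a = k then 1 else 0)" for k a
  define t where "t = 1 / (1 - c)"
  define V where "V a b = (if a = b then 1 else 0) - t * (\<Sum>k<K. w k a * w k b)" for a b
  have w_diag: "w k l = (if k = l then c - 1 else 0)" if "k < K" "l < K" for k l
    using overlap[OF that] by (simp add: w_def)
  have gram: "(\<Sum>a<N. w k a * w l a) = (if k = l then 2 - 2 * c else 0)" if "k < K" "l < K" for k l
  proof -
    have "w k a * w l a = psi k a * psi l a - (if a = l then psi k a else 0)
        - (if a = k then psi l a else 0) + (if a = k then (if k = l then 1 else 0) else 0)" for a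
      by (simp add: w_def algebra_simps)
    then have "(\<Sum>a<N. w k a * w l a) = (\<Sum>a<N. psi k a * psi l a) - psi k l - psi l k
        + (if k = l then 1 else 0)"
      using that \<open>K \<le> N\<close> by (simp add: sum.distrib sum_subtractf sum.delta')
    then show ?thesis using orthonormal[OF that] overlap[OF that] overlap[OF that(2,1)] by auto
  qed
  have w_vanishes: "w k a = 0" if "c = 1" "k < K" "a < N" for k a
  proof -
    have "(\<Sum>a<N. (w k a)\<^sup>2) = 0" using gram[of k k] that by (simp add: power2_eq_square)
    then show ?thesis using that(3) by (simp add: sum_nonneg_eq_0_iff)
  qed
  show thesis
  proof
    show "V a l = psi l a" if "a < N" "l < K" for a l
    proof -
      have "(\<Sum>k<K. w k a * w k l) = (c - 1) * w l a"
        using that by (simp add: w_diag if_distrib sum.delta cong: if_cong)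
      moreover have "t * ((c - 1) * w l a) = - w l a"
        using w_vanishes[OF _ that(2,1)] by (cases "c = 1") (auto simp: t_def field_simps)
      ultimately show ?thesis by (simp add: V_def w_def)
    qed
    show "V a b = V b a" for a b by (simp add: V_def mult.commute)
    have "t * t * (2 - 2 * c) = 2 * t"
    proof (cases "c = 1")
      case False
      then have "t * (1 - c) = 1" by (simp add: t_def)
      moreover have "t * t * (2 - 2 * c) = 2 * t * (t * (1 - c))" by (simp add: algebra_simps)
      ultimately show ?thesis by simp
    qed (simp add: t_def)
    then show "(\<Sum>x<N. V a x * V x b) = (if a = b then 1 else 0)" if "a < N" "b < N" for a b
      using reflection_involutive[OF gram _ that] unfolding V_def by blast
  qed
qed

definition mixture_mat :: "nat \<Rightarrow> nat \<Rightarrow> (nat \<Rightarrow> real) \<Rightarrow> (nat \<Rightarrow> nat \<Rightarrow> real) \<Rightarrow> complex mat"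
  where "mixture_mat N K lam psi =
    mat N N (\<lambda>(a, b). complex_of_real (\<Sum>k<K. lam k * psi k a * psi k b))"

lemma char_poly_mat_diag: "char_poly (mat_diag N f) = (\<Prod>a\<leftarrow>map f [0..<N]. [:- a, 1:])"
proof -
  have "diag_mat (mat_diag N f) = map f [0..<N]"
    by (simp add: diag_mat_def mat_diag_def list_eq_iff_nth_eq)
  moreover have "char_poly (mat_diag N f) = (\<Prod>a\<leftarrow>diag_mat (mat_diag N f). [:- a, 1:])"
    by (rule char_poly_upper_triangular[of _ N]) (auto simp: upper_triangular_def mat_diag_def)
  ultimately show ?thesis by simp
qed

lemma mixture_mat_similar_mat_diag:
  fixes psi :: "nat \<Rightarrow> nat \<Rightarrow> real" and c :: real
  assumes "K \<le> N"
    and orthonormal: "\<And>k l. k < K \<Longrightarrow> l < K \<Longrightarrow>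
      (\<Sum>a<N. psi k a * psi l a) = (if k = l then 1 else 0)"
    and overlap: "\<And>k l. k < K \<Longrightarrow> l < K \<Longrightarrow> psi k l = (if k = l then c else 0)"
  shows "similar_mat (mixture_mat N K lam psi)
    (mat_diag N (\<lambda>a. complex_of_real (if a < K then lam a else 0)))"
proof -
  obtain V where V_frame: "\<And>a l. a < N \<Longrightarrow> l < K \<Longrightarrow> V a l = psi l a"
    and V_sym: "\<And>a b. V a b = V b a"
    and V_invol: "\<And>a b. a < N \<Longrightarrow> b < N \<Longrightarrow> (\<Sum>x<N. V a x * V x b) = (if a = b then 1 else 0)"
    using symmetric_involution_onto_frame[OF assms] by blast
  define U where "U = mat N N (\<lambda>(a, b). complex_of_real (V a b))"
  define D where "D = mat_diag N (\<lambda>a. complex_of_real (if a < K then lam a else 0))"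
  have U: "U \<in> carrier_mat N N" by (simp add: U_def)
  have UU: "U * U = 1\<^sub>m N"
    by (rule eq_matI) (auto simp: U_def scalar_prod_def atLeast0LessThan V_invol
        simp flip: of_real_sum of_real_mult)
  have UD: "U * D = mat N N (\<lambda>(a, x). complex_of_real (V a x * (if x < K then lam x else 0)))"
    unfolding D_def mat_diag_mult_right[OF U] by (rule eq_matI) (auto simp: U_def)
  have "mixture_mat N K lam psi = U * D * U"
  proof (rule eq_matI)
    fix a b assume "a < dim_row (U * D * U)" "b < dim_col (U * D * U)"
    then have ab: "a < N" "b < N" by (auto simp: U_def)
    have "(U * D * U) $$ (a, b) = complex_of_real (\<Sum>x<N. V a x * (if x < K then lam x else 0) * V x b)"
      using ab unfolding UD by (simp add: U_def scalar_prod_def atLeast0LessThan)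
    also have "(\<Sum>x<N. V a x * (if x < K then lam x else 0) * V x b) = (\<Sum>x<K. lam x * psi x a * psi x b)"
    proof (rule sum.mono_neutral_cong_right)
      show "{..<K} \<subseteq> {..<N}" using \<open>K \<le> N\<close> by auto
      show "V a x * (if x < K then lam x else 0) * V x b = lam x * psi x a * psi x b" if "x \<in> {..<K}" for x
        using that ab V_frame V_sym[of x b] by simp
    qed auto
    finally show "mixture_mat N K lam psi $$ (a, b) = (U * D * U) $$ (a, b)"
      using ab by (simp add: mixture_mat_def)
  qed (auto simp: U_def mixture_mat_def)
  then show ?thesis
    using U UU by (intro similar_matI[of _ _ U U N]) (auto simp: D_def)
qed

lemma density_op_mixture_mat:
  fixes psi :: "nat \<Rightarrow> nat \<Rightarrow> real" and lam :: "nat \<Rightarrow> real"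
  assumes unit: "\<And>k. k < K \<Longrightarrow> (\<Sum>a<N. psi k a * psi k a) = 1"
    and nonneg: "\<And>k. k < K \<Longrightarrow> 0 \<le> lam k"
    and sum_one: "(\<Sum>k<K. lam k) = 1"
  shows "density_op N (mixture_mat N K lam psi)"
proof -
  define rho where "rho = mixture_mat N K lam psi"
  have "mat_adjoint rho = rho"
    by (rule eq_matI) (auto simp: mat_adjoint_def rho_def mixture_mat_def mat_of_rows_index
        mult.commute mult.left_commute)
  moreover have "0 \<le> Re (\<Sum>i<N. \<Sum>j<N. cnj (v $ i) * rho $$ (i, j) * v $ j)" for v :: "complex vec"
  proof -
    define z where "z k = (\<Sum>j<N. complex_of_real (psi k j) * v $ j)" for k
    have "cnj (z k) * z k = (\<Sum>i<N. \<Sum>j<N.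
        (complex_of_real (psi k i) * cnj (v $ i)) * (complex_of_real (psi k j) * v $ j))" for k
      by (simp add: z_def sum_product)
    then have "(\<Sum>i<N. \<Sum>j<N. cnj (v $ i) * rho $$ (i, j) * v $ j)
        = (\<Sum>k<K. complex_of_real (lam k) * (cnj (z k) * z k))"
      by (simp add: rho_def mixture_mat_def sum_distrib_left sum_distrib_right sum.swap[of _ "{..<K}"]
          algebra_simps)
    also have "\<dots> = complex_of_real (\<Sum>k<K. lam k * (cmod (z k))\<^sup>2)"
      by (simp only: of_real_sum of_real_mult complex_norm_square mult.commute)
    finally have "Re (\<Sum>i<N. \<Sum>j<N. cnj (v $ i) * rho $$ (i, j) * v $ j)
        = (\<Sum>k<K. lam k * (cmod (z k))\<^sup>2)"
      by (simp only: Re_complex_of_real)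
    moreover have "0 \<le> (\<Sum>k<K. lam k * (cmod (z k))\<^sup>2)"
      using nonneg by (intro sum_nonneg) simp
    ultimately show ?thesis by (simp only:)
  qed
  moreover have "(\<Sum>i<N. rho $$ (i, i)) = 1"
  proof -
    have "(\<Sum>i<N. \<Sum>k<K. lam k * psi k i * psi k i) = (\<Sum>k<K. lam k * (\<Sum>i<N. psi k i * psi k i))"
      by (simp add: sum.swap[of _ "{..<N}"] sum_distrib_left mult.assoc)
    then show ?thesis using sum_one unit by (simp add: rho_def mixture_mat_def flip: of_real_sum)
  qed
  ultimately show ?thesis by (simp add: density_op_def rho_def mixture_mat_def)
qed

text \<open>\<open>cyclic_vec q u k\<close> is \<open>\<Sum>\<^sub>i u\<^sub>i e\<^sub>i \<otimes> f\<^bsub>(i + k) mod q\<^esub>\<close>, with \<open>e\<^sub>i \<otimes> f\<^sub>j\<close> at index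
  \<open>i * q + j\<close> as in \<^const>\<open>ptrace_B\<close>.\<close>

definition cyclic_vec :: "nat \<Rightarrow> (nat \<Rightarrow> real) \<Rightarrow> nat \<Rightarrow> nat \<Rightarrow> real" where
  "cyclic_vec q u k a = (if a mod q = (a div q + k) mod q then u (a div q) else 0)"

lemma cyclic_vec_index:
  "j < q \<Longrightarrow> cyclic_vec q u k (i * q + j) = (if j = (i + k) mod q then u i else 0)"
  by (simp add: cyclic_vec_def)

lemma cyclic_vec_overlap:
  "k < q \<Longrightarrow> l < q \<Longrightarrow> cyclic_vec q u k l = (if k = l then u 0 else 0)"
  by (auto simp: cyclic_vec_def)

lemma cyclic_vec_orthonormal:
  assumes "(\<Sum>i<p. (u i)\<^sup>2) = 1" "k < q" "l < q"
  shows "(\<Sum>a<p * q. cyclic_vec q u k a * cyclic_vec q u l a) = (if k = l then 1 else 0)"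
proof -
  have "(\<Sum>a<p * q. cyclic_vec q u k a * cyclic_vec q u l a)
      = (\<Sum>i<p. if (i + k) mod q = (i + l) mod q then (u i)\<^sup>2 else 0)"
    unfolding sum_lessThan_mult_nat using assms(2)
    by (intro sum.cong refl) (simp add: cyclic_vec_index if_distrib sum.delta' power2_eq_square
        cong: if_cong)
  also have "\<dots> = (if k = l then 1 else 0)"
  proof (cases "k = l")
    case False
    then have "(i + k) mod q \<noteq> (i + l) mod q" for i
      using mod_add_left_cancel_less[OF assms(2,3)] by blast
    then show ?thesis using False by simp
  qed (simp add: assms(1))
  finally show ?thesis .
qed

lemma ptrace_B_cyclic_mixture:
  assumes support: "\<And>i. q \<le> i \<Longrightarrow> i < p \<Longrightarrow> u i = 0" and sum_one: "(\<Sum>k<q. lam k) = 1"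
  shows "ptrace_B p q (mixture_mat (p * q) q lam (cyclic_vec q u))
    = mat_diag p (\<lambda>i. complex_of_real ((u i)\<^sup>2))"
proof (rule eq_matI)
  fix i i' assume "i < dim_row (mat_diag p (\<lambda>i. complex_of_real ((u i)\<^sup>2)))"
    "i' < dim_col (mat_diag p (\<lambda>i. complex_of_real ((u i)\<^sup>2)))"
  then have ii': "i < p" "i' < p" by (auto simp: mat_diag_def)
  have "0 < q" using sum_one by (cases q) auto
  have "(\<Sum>j<q. cyclic_vec q u k (i * q + j) * cyclic_vec q u k (i' * q + j))
      = (if (i + k) mod q = (i' + k) mod q then u i * u i' else 0)" for k
    using \<open>0 < q\<close> by (simp add: cyclic_vec_index if_distrib sum.delta' cong: if_cong)
  then have "(\<Sum>j<q. \<Sum>k<q. lam k * cyclic_vec q u k (i * q + j) * cyclic_vec q u k (i' * q + j))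
      = (\<Sum>k<q. lam k * (if (i + k) mod q = (i' + k) mod q then u i * u i' else 0))"
    by (subst sum.swap) (simp add: mult.assoc flip: sum_distrib_left)
  also have "\<dots> = (if i = i' then (u i)\<^sup>2 else 0)"
  proof (cases "i = i'")
    case True
    then show ?thesis using sum_one by (simp add: power2_eq_square flip: sum_distrib_right)
  next
    case False
    have "lam k * (if (i + k) mod q = (i' + k) mod q then u i * u i' else 0) = 0" for k
    proof (cases "i < q \<and> i' < q")
      case True
      then show ?thesis
        using mod_add_left_cancel_less[of i q i' k] \<open>i \<noteq> i'\<close> by (auto simp: add.commute)
    qed (use support ii' in auto)
    then show ?thesis using False by simp
  qed
  finally show "ptrace_B p q (mixture_mat (p * q) q lam (cyclic_vec q u)) $$ (i, i')
      = mat_diag p (\<lambda>i. complex_of_real ((u i)\<^sup>2)) $$ (i, i')"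
    using ii' mult_add_less_mult[OF ii'(1)] mult_add_less_mult[OF ii'(2)]
    by (simp add: ptrace_B_def mixture_mat_def mat_diag_def flip: of_real_sum)
qed (simp_all add: ptrace_B_def mat_diag_def)

lemma mem_Gamma_if_at_most_q_nonzero:
  fixes s t :: "real list"
  assumes s: "sorted_wrt (\<ge>) s" "length s = p * q" "\<forall>x\<in>set s. 0 \<le> x" "sum_list s = 1"
      "\<And>a. q \<le> a \<Longrightarrow> a < p * q \<Longrightarrow> s ! a = 0"
    and t: "sorted_wrt (\<ge>) t" "length t = p" "\<forall>x\<in>set t. 0 \<le> x" "sum_list t = 1"
      "\<And>i. q \<le> i \<Longrightarrow> i < p \<Longrightarrow> t ! i = 0"
  shows "(s, t) \<in> Gamma p q"
proof -
  have "0 < p" using t(2,4) by (cases p) auto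
  moreover have "0 < q" using s(2,4) by (cases q) auto
  ultimately have "q \<le> p * q" by simp
  define u where "u i = sqrt (t ! i)" for i
  define rho where "rho = mixture_mat (p * q) q (nth s) (cyclic_vec q u)"
  have u_sq: "(u i)\<^sup>2 = t ! i" if "i < p" for i
    using t(2,3) that by (simp add: u_def)
  have "(\<Sum>i<p. (u i)\<^sup>2) = 1"
    using t(2,4) by (simp add: u_sq sum_list_sum_nth atLeast0LessThan)
  then have orthonormal: "\<And>k l. k < q \<Longrightarrow> l < q \<Longrightarrow>
      (\<Sum>a<p * q. cyclic_vec q u k a * cyclic_vec q u l a) = (if k = l then 1 else 0)"
    by (rule cyclic_vec_orthonormal)
  have s_trunc: "map (\<lambda>a. if a < q then s ! a else 0) [0..<p * q] = s"
    using s(2,5) by (intro nth_equalityI) auto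
  have "(\<Sum>k<q. s ! k) = (\<Sum>a<p * q. s ! a)"
    by (rule sum.mono_neutral_left) (use s(5) \<open>q \<le> p * q\<close> in auto)
  also have "\<dots> = 1" using s(2,4) by (simp add: sum_list_sum_nth atLeast0LessThan)
  finally have "(\<Sum>k<q. s ! k) = 1" .
  moreover have "0 \<le> s ! k" if "k < q" for k
    using s(2,3) that \<open>q \<le> p * q\<close> by (metis nth_mem order_less_le_trans)
  ultimately have "density_op (p * q) rho"
    unfolding rho_def using orthonormal by (intro density_op_mixture_mat) auto
  moreover have "is_spec rho s"
  proof -
    have "similar_mat rho (mat_diag (p * q) (\<lambda>a. complex_of_real (if a < q then s ! a else 0)))"
      unfolding rho_def using \<open>q \<le> p * q\<close> orthonormal cyclic_vec_overlap
      by (rule mixture_mat_similar_mat_diag)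
    then have "char_poly rho = (\<Prod>x\<leftarrow>s. [:- complex_of_real x, 1:])"
      by (subst s_trunc[symmetric]) (simp add: char_poly_similar char_poly_mat_diag o_def)
    then show ?thesis using s(1,2) by (simp add: is_spec_def rho_def mixture_mat_def)
  qed
  moreover have "is_spec (ptrace_B p q rho) t"
  proof -
    have "ptrace_B p q rho = mat_diag p (\<lambda>i. complex_of_real ((u i)\<^sup>2))"
      unfolding rho_def using t(5) \<open>(\<Sum>k<q. s ! k) = 1\<close>
      by (intro ptrace_B_cyclic_mixture) (auto simp: u_def)
    also have "\<dots> = mat_diag p (\<lambda>i. complex_of_real (t ! i))"
      by (rule eq_matI) (auto simp: mat_diag_def u_sq simp del: of_real_power)
    finally have "char_poly (ptrace_B p q rho) = (\<Prod>a\<leftarrow>map (nth t) [0..<p]. [:- complex_of_real a, 1:])"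
      by (simp add: char_poly_mat_diag o_def)
    also have "map (nth t) [0..<p] = t" using t(2) map_nth by metis
    finally show ?thesis using t(1,2) by (simp add: is_spec_def ptrace_B_def)
  qed
  ultimately show ?thesis unfolding Gamma_def by blast
qed

lemma is_partition_length_le: "is_partition n la \<Longrightarrow> length la \<le> n"
proof -
  have "\<forall>x\<in>set la. 0 < x \<Longrightarrow> length la \<le> sum_list la" for la :: "nat list"
    by (induction la) auto
  then show "is_partition n la \<Longrightarrow> length la \<le> n" by (auto simp: is_partition_def)
qed

lemma length_bar: "length la \<le> d \<Longrightarrow> length (bar n d la) = d"
  by (simp add: bar_def)

lemma nth_bar: "i < d \<Longrightarrow> bar n d la ! i = (if i < length la then real (la ! i) / real n else 0)"
  by (simp add: bar_def nth_append)

lemma bar_nonneg: "\<forall>x\<in>set (bar n d la). 0 \<le> x"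
  by (auto simp: bar_def)

lemma sorted_bar: "is_partition n la \<Longrightarrow> sorted_wrt (\<ge>) (bar n d la)"
proof -
  have "sorted_wrt (\<ge>) (replicate k (0::real))" for k by (induction k) auto
  then show "is_partition n la \<Longrightarrow> sorted_wrt (\<ge>) (bar n d la)"
    unfolding bar_def is_partition_def
    by (auto simp: sorted_wrt_append sorted_wrt_map divide_right_mono
        elim!: sorted_wrt_mono_rel[rotated])
qed

lemma sum_list_bar: "is_partition n la \<Longrightarrow> 0 < n \<Longrightarrow> sum_list (bar n d la) = 1"
proof -
  have "sum_list (map (\<lambda>x. real x / real n) la) = real (sum_list la) / real n"
    by (induction la) (auto simp: add_divide_distrib)
  then show "is_partition n la \<Longrightarrow> 0 < n \<Longrightarrow> sum_list (bar n d la) = 1"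
    by (simp add: bar_def is_partition_def sum_list_replicate)
qed

theorem corollary1:
  fixes p n :: nat and la mu :: "nat list"
  assumes "0 < p" and "0 < n"
    and "is_partition n la"
    and "mu \<in> Par n p"
  shows "\<exists>qp::nat. 1 \<le> qp \<and> qp \<le> n \<and>
           (\<forall>q \<ge> qp. la \<in> Par n (p * q) \<longrightarrow>
              (bar n (p * q) la, bar n p mu) \<in> Gamma p q)"
proof -
  have mu: "is_partition n mu" "length mu \<le> p" using assms(4) by (auto simp: Par_def)
  define qp where "qp = max 1 (max (length la) (length mu))"
  have "qp \<le> n"
    using is_partition_length_le[OF assms(3)] is_partition_length_le[OF mu(1)] assms(2)
    by (simp add: qp_def)
  moreover have "(bar n (p * q) la, bar n p mu) \<in> Gamma p q"
    if "qp \<le> q" "la \<in> Par n (p * q)" for q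
  proof (rule mem_Gamma_if_at_most_q_nonzero)
    have "length la \<le> p * q" using that(2) by (simp add: Par_def)
    then show "length (bar n (p * q) la) = p * q" by (rule length_bar)
    show "length (bar n p mu) = p" using mu(2) by (rule length_bar)
    show "bar n (p * q) la ! a = 0" if "q \<le> a" "a < p * q" for a
      using that \<open>qp \<le> q\<close> by (simp add: nth_bar qp_def)
    show "bar n p mu ! i = 0" if "q \<le> i" "i < p" for i
      using that \<open>qp \<le> q\<close> by (simp add: nth_bar qp_def)
  qed (simp_all add: assms mu bar_nonneg sorted_bar sum_list_bar)
  ultimately show ?thesis by (auto simp: qp_def)
qed

end
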